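(* The bicyclic monoid $B = \langle p,q : pq = 1 \rangle$ is not sofic.
   Context: The bicyclic monoid is the monoid given by the presentation with two generators $p,q$ and the single relation $pq=1$; every element can be written uniquely as $q^a p^b$ with $a,b$ non-negative integers. For a non-empty finite set $X$, $\mathrm{Map}(X)$ denotes the monoid of all maps $X \to X$ under composition (identity element $\mathrm{Id}_X$), equipped with the Hamming metric $d_X(f,g) = |\{x \in X : f(x) \neq g(x)\}|/|X|$. Let $M$ be a monoid with identity $1_M$, $K \subset M$ finite and $\varepsilon,\alpha>0$. A map $\varphi\colon M \to \mathrm{Map}(X)$ is a $(K,\varepsilon)$-morphism if $d_X(\varphi(k_1k_2),\varphi(k_1)\varphi(k_2)) \le \varepsilon$ for all $k_1,k_2 \in K$ and $d_X(\varphi(1_M),\mathrm{Id}_X) \le \varepsilon$; it is $(K,\alpha)$-injective if $d_X(\varphi(k_1),\varphi(k_2)) \ge \alpha$ for all distinct $k_1,k_2 \in K$. The monoid $M$ is called sofic if for every finite subset $K \subset M$ and every $\varepsilon>0$ there exist a non-empty finite set $X$ and a map $\varphi\colon M \to \mathrm{Map}(X)$ that is a $(K,1-\varepsilon)$-injective $(K,\varepsilon)$-morphism. *)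

theory Defs
  imports Main "HOL.Real"
begin

(* Hamming distance on Map(X), X a finite nonempty set; maps X -> X are
   represented by functions nat => nat mapping X into X (values outside X
   are irrelevant). *)
definition hamming :: "nat set \<Rightarrow> (nat \<Rightarrow> nat) \<Rightarrow> (nat \<Rightarrow> nat) \<Rightarrow> real" where
  "hamming X f g = real (card {x \<in> X. f x \<noteq> g x}) / real (card X)"

definition is_map_into :: "nat set \<Rightarrow> ('a \<Rightarrow> nat \<Rightarrow> nat) \<Rightarrow> bool" where
  "is_map_into X \<phi> \<longleftrightarrow> (\<forall>m x. x \<in> X \<longrightarrow> \<phi> m x \<in> X)"

definition K_eps_morphism ::
  "('a \<Rightarrow> 'a \<Rightarrow> 'a) \<Rightarrow> 'a \<Rightarrow> nat set \<Rightarrow> ('a \<Rightarrow> nat \<Rightarrow> nat) \<Rightarrow> 'a set \<Rightarrow> real \<Rightarrow> bool" where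
  "K_eps_morphism mult one X \<phi> K \<epsilon> \<longleftrightarrow>
     (\<forall>k1\<in>K. \<forall>k2\<in>K. hamming X (\<phi> (mult k1 k2)) (\<phi> k1 \<circ> \<phi> k2) \<le> \<epsilon>) \<and>
     hamming X (\<phi> one) id \<le> \<epsilon>"

definition K_alpha_injective ::
  "nat set \<Rightarrow> ('a \<Rightarrow> nat \<Rightarrow> nat) \<Rightarrow> 'a set \<Rightarrow> real \<Rightarrow> bool" where
  "K_alpha_injective X \<phi> K \<alpha> \<longleftrightarrow>
     (\<forall>k1\<in>K. \<forall>k2\<in>K. k1 \<noteq> k2 \<longrightarrow> hamming X (\<phi> k1) (\<phi> k2) \<ge> \<alpha>)"

definition sofic :: "('a \<Rightarrow> 'a \<Rightarrow> 'a) \<Rightarrow> 'a \<Rightarrow> bool" where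
  "sofic mult one \<longleftrightarrow>
     (\<forall>K :: 'a set. \<forall>\<epsilon> :: real. finite K \<and> \<epsilon> > 0 \<longrightarrow>
        (\<exists>X :: nat set. \<exists>\<phi>. finite X \<and> X \<noteq> {} \<and> is_map_into X \<phi> \<and>
            K_alpha_injective X \<phi> K (1 - \<epsilon>) \<and> K_eps_morphism mult one X \<phi> K \<epsilon>))"

(* Bicyclic monoid <p,q | pq = 1>: the element q^a p^b is encoded as (a,b).
   Product: q^a p^b q^c p^d = q^(a + (c - b)) p^(d + (b - c)) (truncated subtraction). *)
definition bicyclic_mult :: "nat \<times> nat \<Rightarrow> nat \<times> nat \<Rightarrow> nat \<times> nat" where
  "bicyclic_mult u v = (case u of (a, b) \<Rightarrow> case v of (c, d) \<Rightarrow> (a + (c - b), d + (b - c)))"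

definition bicyclic_one :: "nat \<times> nat" where
  "bicyclic_one = (0, 0)"

definition bicyclic_p :: "nat \<times> nat" where "bicyclic_p = (0, 1)"
definition bicyclic_q :: "nat \<times> nat" where "bicyclic_q = (1, 0)"

end

theory Submission
  imports Defs
begin

text \<open>
  On a finite set a one-sided inverse is almost two-sided: if \<open>P \<circ> Q\<close> agrees with the identity
  off a small set, then \<open>Q\<close> is injective on a large set, its image is large, and \<open>Q \<circ> P\<close> is
  the identity on that image. Hence in a sofic approximation of a monoid with \<open>pq = 1\<close>, the
  images of \<open>qp\<close> and of \<open>1\<close> are Hamming-close. Injectivity, however, demands that they be
  almost everywhere different as soon as \<open>qp \<noteq> 1\<close>.
\<close>

lemma hamming_commute: "hamming X f g = hamming X g f"
  unfolding hamming_def by (metis (mono_tags, lifting))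

lemma hamming_triangle: "hamming X f h \<le> hamming X f g + hamming X g h"
proof (cases "finite X")
  case True
  let ?D = "\<lambda>u v. {x \<in> X. u x \<noteq> v x}"
  have "card (?D f h) \<le> card (?D f g \<union> ?D g h)"
    by (rule card_mono) (use True in auto)
  also have "\<dots> \<le> card (?D f g) + card (?D g h)"
    by (rule card_Un_le)
  finally have "real (card (?D f h)) \<le> real (card (?D f g)) + real (card (?D g h))"
    by linarith
  then show ?thesis
    unfolding hamming_def add_divide_distrib[symmetric] by (simp add: divide_right_mono)
next
  case False
  then show ?thesis by (simp add: hamming_def)
qed

lemma card_comp_neq_id_swap:
  assumes "finite X" and Q_into: "\<And>x. x \<in> X \<Longrightarrow> Q x \<in> X"
  shows "card {y \<in> X. Q (P y) \<noteq> y} \<le> card {x \<in> X. P (Q x) \<noteq> x}"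
proof -
  define A where "A = {x \<in> X. P (Q x) = x}"
  have "inj_on Q A"
    unfolding A_def by (rule inj_onI) (metis (mono_tags, lifting) mem_Collect_eq)
  then have card_image: "card (Q ` A) = card A"
    by (rule card_image)
  have QA_sub: "Q ` A \<subseteq> X"
    using Q_into unfolding A_def by auto
  have "{y \<in> X. Q (P y) \<noteq> y} \<subseteq> X - Q ` A"
    unfolding A_def by auto
  then have "card {y \<in> X. Q (P y) \<noteq> y} \<le> card (X - Q ` A)"
    using assms(1) by (intro card_mono) auto
  also have "\<dots> = card X - card A"
    using card_Diff_subset[OF finite_subset[OF QA_sub assms(1)] QA_sub] card_image by simp
  also have "\<dots> = card (X - A)"
    using assms(1) by (simp add: card_Diff_subset A_def)
  also have "X - A = {x \<in> X. P (Q x) \<noteq> x}"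
    unfolding A_def by auto
  finally show ?thesis .
qed

lemma hamming_comp_id_swap:
  assumes "finite X" and "\<And>x. x \<in> X \<Longrightarrow> Q x \<in> X"
  shows "hamming X (Q \<circ> P) id \<le> hamming X (P \<circ> Q) id"
proof -
  have "card {y \<in> X. Q (P y) \<noteq> y} \<le> card {x \<in> X. P (Q x) \<noteq> x}"
    using assms by (rule card_comp_neq_id_swap)
  then show ?thesis
    unfolding hamming_def by (simp add: divide_right_mono)
qed

lemma not_sofic_if_one_sided_inverse:
  assumes pq: "mult p q = one" and qp: "mult q p \<noteq> one"
  shows "\<not> sofic mult one"
proof
  assume "sofic mult one"
  define K where "K = {one, p, q, mult q p}"
  \<comment> \<open>any \<open>e < 1/5\<close> works: the argument below yields \<open>1 - e \<le> 4 e\<close>\<close>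
  define e :: real where "e = 1/10"
  have "finite K" "e > 0"
    unfolding K_def e_def by auto
  then obtain X \<phi> where X: "finite X" "is_map_into X \<phi>"
    and inj: "K_alpha_injective X \<phi> K (1 - e)"
    and mor: "K_eps_morphism mult one X \<phi> K e"
    using \<open>sofic mult one\<close> unfolding sofic_def by blast
  let ?d = "hamming X"
  have one_PQ: "?d (\<phi> one) (\<phi> p \<circ> \<phi> q) \<le> e"
    using mor pq unfolding K_eps_morphism_def K_def by force
  have qp_QP: "?d (\<phi> (mult q p)) (\<phi> q \<circ> \<phi> p) \<le> e"
    using mor unfolding K_eps_morphism_def K_def by blast
  have one_id: "?d (\<phi> one) id \<le> e"
    using mor unfolding K_eps_morphism_def by blast
  have qp_one_far: "?d (\<phi> (mult q p)) (\<phi> one) \<ge> 1 - e"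
    using inj qp unfolding K_alpha_injective_def K_def by blast
  have "?d (\<phi> p \<circ> \<phi> q) id \<le> 2 * e"
    using hamming_triangle[of X "\<phi> p \<circ> \<phi> q" id "\<phi> one"] one_PQ one_id
    by (simp add: hamming_commute)
  then have "?d (\<phi> q \<circ> \<phi> p) id \<le> 2 * e"
    using hamming_comp_id_swap[of X "\<phi> q" "\<phi> p"] X unfolding is_map_into_def by force
  then have "?d (\<phi> (mult q p)) (\<phi> one) \<le> 4 * e"
    using hamming_triangle[of X "\<phi> (mult q p)" "\<phi> one" "\<phi> q \<circ> \<phi> p"]
      hamming_triangle[of X "\<phi> q \<circ> \<phi> p" "\<phi> one" id] qp_QP one_id
    by (simp add: hamming_commute)
  with qp_one_far show False
    unfolding e_def by simp
qed

theorem theorem5p1: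
  shows "\<not> sofic bicyclic_mult bicyclic_one"
proof (rule not_sofic_if_one_sided_inverse)
  show "bicyclic_mult bicyclic_p bicyclic_q = bicyclic_one"
    by (simp add: bicyclic_mult_def bicyclic_p_def bicyclic_q_def bicyclic_one_def)
  show "bicyclic_mult bicyclic_q bicyclic_p \<noteq> bicyclic_one"
    by (simp add: bicyclic_mult_def bicyclic_p_def bicyclic_q_def bicyclic_one_def)
qed

end
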